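(* Let $G$ be a group, written multiplicatively, with more than $3$ elements, and let $F=G\cup\{0\}$ be the hyperfield with multiplication extending that of $G$ by $x\cdot 0=0\cdot x=0$ and hyperaddition given by $x+y=F\setminus\{0,x,y\}$ for distinct $x,y\in G$, $x+x=\{0,x\}$ for $x\in G$, and $x+0=0+x=\{x\}$ for $x\in F$. Suppose $|F|\ge 6$, and let $x,y,z$ be three distinct nonzero elements of $F$. Then $x+y+z=F$.
   Context: For subsets $A,B\subseteq F$ one sets $A+B=\bigcup_{a\in A,b\in B}(a+b)$, identifying an element with the singleton containing it; thus $x+y+z=(x+y)+z$. *)

theory Defs
  imports "HOL-Algebra.Group"
begin

text \<open>The hyperfield F = G \<union> {0} is modelled as the option type over the carrier of G:
  None plays the role of 0, Some g the element g of G.\<close>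

definition hfield :: "('a, 'b) monoid_scheme \<Rightarrow> 'a option set" where
  "hfield G = {None} \<union> Some ` carrier G"

definition hmult :: "('a, 'b) monoid_scheme \<Rightarrow> 'a option \<Rightarrow> 'a option \<Rightarrow> 'a option" where
  "hmult G x y = (case (x, y) of (Some a, Some b) \<Rightarrow> Some (a \<otimes>\<^bsub>G\<^esub> b) | _ \<Rightarrow> None)"

definition hadd :: "('a, 'b) monoid_scheme \<Rightarrow> 'a option \<Rightarrow> 'a option \<Rightarrow> 'a option set" where
  "hadd G x y =
     (if y = None then {x}
      else if x = None then {y}
      else if x = y then {None, x}
      else hfield G - {None, x, y})"

definition hsum :: "('a, 'b) monoid_scheme \<Rightarrow> 'a option set \<Rightarrow> 'a option set \<Rightarrow> 'a option set" where
  "hsum G A B = (\<Union>a\<in>A. \<Union>b\<in>B. hadd G a b)"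

end

theory Submission
  imports Defs
begin

text \<open>For distinct nonzero x, y the sum x + y = F - {0, x, y} contains z and, since |F| \<ge> 6,
  two further elements u, v. Then z + z = {0, z}, z + u and z + v already cover F: u lies in
  z + v, v lies in z + u, and every other element lies in both.\<close>

lemma two_elements_outside_finite:
  assumes "finite T" and "infinite S \<or> card T + 2 \<le> card S"
  obtains u v where "u \<in> S - T" "v \<in> S - T" "u \<noteq> v"
proof -
  have "infinite (S - T) \<or> 2 \<le> card (S - T)"
    using assms Diff_infinite_finite diff_card_le_card_Diff[of T S] by fastforce
  then obtain B where "B \<subseteq> S - T" "card B = 2"
    by (metis infinite_arbitrarily_large obtain_subset_with_card_n)
  then show thesis
    using that by (auto simp: card_2_iff)
qed

lemma hadd_self: "a \<noteq> None \<Longrightarrow> hadd G a a = {None, a}"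
  by (simp add: hadd_def)

lemma hadd_distinct:
  "a \<noteq> None \<Longrightarrow> b \<noteq> None \<Longrightarrow> a \<noteq> b \<Longrightarrow> hadd G a b = hfield G - {None, a, b}"
  by (simp add: hadd_def del: not_None_eq)

lemma hadd_subset_hfield: "a \<in> hfield G \<Longrightarrow> b \<in> hfield G \<Longrightarrow> hadd G a b \<subseteq> hfield G"
  by (auto simp: hadd_def hfield_def)

lemma hsum_singletons [simp]: "hsum G {a} {b} = hadd G a b"
  by (simp add: hsum_def)

lemma hadd_subset_hsum: "a \<in> A \<Longrightarrow> b \<in> B \<Longrightarrow> hadd G a b \<subseteq> hsum G A B"
  by (auto simp: hsum_def)

lemma hsum_subset_hfield: "A \<subseteq> hfield G \<Longrightarrow> B \<subseteq> hfield G \<Longrightarrow> hsum G A B \<subseteq> hfield G"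
  using hadd_subset_hfield by (fastforce simp: hsum_def)

lemma hfield_subset_hadd_triple:
  assumes "u \<noteq> None" "v \<noteq> None" "z \<noteq> None" "u \<noteq> v" "u \<noteq> z" "v \<noteq> z"
  shows "hfield G \<subseteq> hadd G z z \<union> hadd G u z \<union> hadd G v z"
  using assms by (auto simp: hadd_self hadd_distinct)

theorem mainTheorem4:
  fixes G :: "('a, 'b) monoid_scheme" and x y z :: "'a option"
  assumes "group G"
    and "infinite (carrier G) \<or> card (carrier G) > 3"
    and "infinite (hfield G) \<or> card (hfield G) \<ge> 6"
    and "x \<in> hfield G" and "y \<in> hfield G" and "z \<in> hfield G"
    and "x \<noteq> None" and "y \<noteq> None" and "z \<noteq> None"
    and "x \<noteq> y" and "y \<noteq> z" and "x \<noteq> z"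
  shows "hsum G (hsum G {x} {y}) {z} = hfield G"
proof
  have xy: "hsum G {x} {y} = hfield G - {None, x, y}"
    using assms(7,8,10) by (simp add: hadd_distinct)
  show "hsum G (hsum G {x} {y}) {z} \<subseteq> hfield G"
    using assms(4-6) by (intro hsum_subset_hfield) (simp_all add: hadd_subset_hfield)
  have "card {None, x, y, z} \<le> 4"
    using card_length[of "[None, x, y, z]"] by simp
  with assms(3) have "infinite (hfield G) \<or> card {None, x, y, z} + 2 \<le> card (hfield G)"
    by auto
  then obtain u v where uv: "u \<in> hfield G - {None, x, y, z}" "v \<in> hfield G - {None, x, y, z}" "u \<noteq> v"
    by (rule two_elements_outside_finite[rotated]) simp_all
  have "z \<in> hsum G {x} {y}" "u \<in> hsum G {x} {y}" "v \<in> hsum G {x} {y}"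
    unfolding xy using uv assms(6,9,11,12) by auto
  then have "hadd G z z \<union> hadd G u z \<union> hadd G v z \<subseteq> hsum G (hsum G {x} {y}) {z}"
    by (simp add: hadd_subset_hsum)
  moreover have "hfield G \<subseteq> hadd G z z \<union> hadd G u z \<union> hadd G v z"
    using uv assms(9) by (intro hfield_subset_hadd_triple) auto
  ultimately show "hfield G \<subseteq> hsum G (hsum G {x} {y}) {z}"
    by blast
qed

end
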